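(* A hypergraph ${\cal H}$ is $1$-Sperner if and only if either it has no vertices (that is, ${\cal H}\in\{(\emptyset,\emptyset),(\emptyset,\{\emptyset\})\}$) or it is a safe gluing of two $1$-Sperner hypergraphs each with fewer vertices than ${\cal H}$.
   Context: A hypergraph ${\cal H}=(V,{\cal E})$ consists of a finite vertex set $V$ and a set ${\cal E}$ of subsets of $V$. It is $1$-Sperner if every two distinct hyperedges $e,f$ satisfy $\min\{|e\setminus f|,|f\setminus e|\}=1$. Given vertex-disjoint hypergraphs ${\cal H}_1=(V_1,{\cal E}_1)$, ${\cal H}_2=(V_2,{\cal E}_2)$ and a new vertex $z\notin V_1\cup V_2$, the gluing ${\cal H}_1\odot{\cal H}_2$ has vertex set $V_1\cup V_2\cup\{z\}$ and hyperedge set $\{\{z\}\cup e: e\in{\cal E}_1\}\cup\{V_1\cup e: e\in{\cal E}_2\}$. A gluing is safe if it results in a $1$-Sperner hypergraph; for $1$-Sperner ${\cal H}_1,{\cal H}_2$ this is equivalent to ${\cal E}_1\neq\{V_1\}$ or ${\cal E}_2\neq\{\emptyset\}$. *)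

theory Defs
  imports Main
begin

definition hypergraph :: "'a set \<Rightarrow> 'a set set \<Rightarrow> bool" where
  "hypergraph V E \<longleftrightarrow> finite V \<and> E \<subseteq> Pow V"

definition one_sperner :: "'a set \<Rightarrow> 'a set set \<Rightarrow> bool" where
  "one_sperner V E \<longleftrightarrow> hypergraph V E \<and>
     (\<forall>e\<in>E. \<forall>f\<in>E. e \<noteq> f \<longrightarrow> min (card (e - f)) (card (f - e)) = 1)"

definition gluing :: "'a set \<Rightarrow> 'a set set \<Rightarrow> 'a set \<Rightarrow> 'a set set \<Rightarrow> 'a \<Rightarrow> 'a set \<times> 'a set set" where
  "gluing V1 E1 V2 E2 z =
     (V1 \<union> V2 \<union> {z}, (\<lambda>e. {z} \<union> e) ` E1 \<union> (\<lambda>e. V1 \<union> e) ` E2)"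

definition gluing_ok :: "'a set \<Rightarrow> 'a set set \<Rightarrow> 'a set \<Rightarrow> 'a set set \<Rightarrow> 'a \<Rightarrow> bool" where
  "gluing_ok V1 E1 V2 E2 z \<longleftrightarrow> hypergraph V1 E1 \<and> hypergraph V2 E2 \<and>
     V1 \<inter> V2 = {} \<and> z \<notin> V1 \<union> V2"

definition safe_gluing :: "'a set \<Rightarrow> 'a set set \<Rightarrow> 'a set \<Rightarrow> 'a set set \<Rightarrow> 'a \<Rightarrow> bool" where
  "safe_gluing V1 E1 V2 E2 z \<longleftrightarrow> gluing_ok V1 E1 V2 E2 z \<and>
     one_sperner (fst (gluing V1 E1 V2 E2 z)) (snd (gluing V1 E1 V2 E2 z))"

end

theory Submission
  imports Defs
begin

text \<open>
  For the forward
  direction, take a splitting vertex z and let V1 be the union of the edges through z with z removed.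
  Then V1 lies inside every edge avoiding z, so the hypergraph is the gluing at z of the edges through z
  (minus z) on V1 and of the edges avoiding z (minus V1) on the remaining vertices; both operations
  preserve all pairwise differences of edges, hence the 1-Sperner property. A splitting vertex exists:
  if all edges have the same size any vertex splits; otherwise, for an edge e of maximum and an edge f
  of minimum size, the 1-Sperner property makes f - e a singleton {w}, and w splits.
\<close>

definition splitting_vertex :: "'a set set \<Rightarrow> 'a \<Rightarrow> bool" where
  "splitting_vertex E z \<longleftrightarrow> (\<forall>e\<in>E. \<forall>f\<in>E. z \<in> e \<longrightarrow> z \<notin> f \<longrightarrow> e - {z} \<subseteq> f)"

lemma card_diff_le_card_diff:
  assumes "finite e" "finite f" "card e \<le> card f"
  shows "card (e - f) \<le> card (f - e)"
  using assms by (simp add: card_Diff_subset_Int Int_commute)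

lemma one_sperner_finite_edge: "one_sperner V E \<Longrightarrow> e \<in> E \<Longrightarrow> finite e"
  unfolding one_sperner_def hypergraph_def by (auto intro: finite_subset)

lemma one_sperner_subset_imp_eq:
  assumes "one_sperner V E" "e \<in> E" "f \<in> E" "e \<subseteq> f"
  shows "e = f"
  using assms unfolding one_sperner_def by (metis Diff_eq_empty_iff card.empty min_0L zero_neq_one)

lemma one_sperner_card_diff_eq_1:
  assumes os: "one_sperner V E" and "e \<in> E" "f \<in> E" "e \<noteq> f" "card e \<le> card f"
  shows "card (e - f) = 1"
proof -
  have "min (card (e - f)) (card (f - e)) = 1"
    using assms unfolding one_sperner_def by blast
  moreover have "card (e - f) \<le> card (f - e)"
    using assms one_sperner_finite_edge[OF os] by (intro card_diff_le_card_diff) auto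
  ultimately show ?thesis by simp
qed

lemma one_sperner_diff_eq_singleton:
  assumes "one_sperner V E" "e \<in> E" "f \<in> E" "e \<noteq> f" "card e \<le> card f" "w \<in> e - f"
  shows "e - f = {w}"
  using one_sperner_card_diff_eq_1[OF assms(1-5)] \<open>w \<in> e - f\<close>
  by (metis card_1_singletonE singletonD)

lemma one_sperner_image:
  assumes os: "one_sperner V E" and "hypergraph W (h ` F)" "F \<subseteq> E"
    and diff: "\<forall>e\<in>F. \<forall>f\<in>F. h e - h f = e - f"
  shows "one_sperner W (h ` F)"
  unfolding one_sperner_def
proof (intro conjI ballI impI)
  fix a b assume "a \<in> h ` F" "b \<in> h ` F" "a \<noteq> b"
  then obtain e f where ef: "e \<in> F" "f \<in> F" "a = h e" "b = h f" "e \<noteq> f" by blast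
  then have "min (card (e - f)) (card (f - e)) = 1"
    using os \<open>F \<subseteq> E\<close> unfolding one_sperner_def by blast
  then show "min (card (a - b)) (card (b - a)) = 1"
    using ef diff by simp
qed (rule \<open>hypergraph W (h ` F)\<close>)

lemma splitting_vertex_if_uniform:
  assumes os: "one_sperner V E" and uniform: "\<forall>e\<in>E. \<forall>f\<in>E. card e = card f"
  shows "splitting_vertex E z"
  unfolding splitting_vertex_def
proof (intro ballI impI subsetI)
  fix e f x assume "e \<in> E" "f \<in> E" "z \<in> e" "z \<notin> f" "x \<in> e - {z}"
  moreover have "card e \<le> card f" using uniform \<open>e \<in> E\<close> \<open>f \<in> E\<close> by (metis order_refl)
  ultimately have "e - f = {z}"
    by (intro one_sperner_diff_eq_singleton[OF os]) auto
  then show "x \<in> f" using \<open>x \<in> e - {z}\<close> by blast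
qed

lemma splitting_vertex_min_diff_max:
  assumes os: "one_sperner V E"
    and e: "e \<in> E" "\<forall>g\<in>E. card g \<le> card e"
    and f: "f \<in> E" "\<forall>g\<in>E. card f \<le> card g"
    and "card f < card e" and w: "w \<in> f" "w \<notin> e"
  shows "splitting_vertex E w"
  unfolding splitting_vertex_def
proof (intro ballI impI subsetI)
  fix e' f' x assume e': "e' \<in> E" "w \<in> e'" and f': "f' \<in> E" "w \<notin> f'" and x: "x \<in> e' - {w}"
  show "x \<in> f'"
  proof (rule ccontr)
    assume "x \<notin> f'"
    have "f - e = {w}"
      using one_sperner_diff_eq_singleton[OF os f(1) e(1)] \<open>card f < card e\<close> w by fastforce
    have "e' - e = {w}"
      using one_sperner_diff_eq_singleton[OF os e'(1) e(1)] e(2) e'(1,2) w(2) by blast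
    have "f - f' = {w}"
      using one_sperner_diff_eq_singleton[OF os f(1) f'(1)] f(2) f'(1,2) w(1) by blast
    have "e' \<noteq> f'" using e'(2) f'(2) by blast
    have "\<not> card e' \<le> card f'"
      using one_sperner_diff_eq_singleton[OF os e'(1) f'(1) \<open>e' \<noteq> f'\<close>] e'(2) f'(2) x \<open>x \<notin> f'\<close>
      by blast
    then have "card (f' - e') = 1"
      using one_sperner_card_diff_eq_1[OF os f'(1) e'(1)] \<open>e' \<noteq> f'\<close> by simp
    then obtain w' where w': "f' - e' = {w'}" by (rule card_1_singletonE)
    show False
    proof (cases "w' \<in> e")
      case True
      then have "f' \<subseteq> e" using w' \<open>e' - e = {w}\<close> f'(2) by fastforce
      then have "f' = e" using one_sperner_subset_imp_eq[OF os f'(1) e(1)] by blast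
      then show False using \<open>e' - e = {w}\<close> x \<open>x \<notin> f'\<close> by blast
    next
      case False
      then have "f \<subseteq> e'" using w' \<open>f - e = {w}\<close> \<open>f - f' = {w}\<close> e'(2) by fastforce
      then have "f = e'" using one_sperner_subset_imp_eq[OF os f(1) e'(1)] by blast
      then show False using \<open>f - f' = {w}\<close> x \<open>x \<notin> f'\<close> by blast
    qed
  qed
qed

lemma one_sperner_splitting_vertex_exists:
  assumes os: "one_sperner V E" and "V \<noteq> {}"
  obtains z where "z \<in> V" "splitting_vertex E z"
proof (cases "\<forall>e\<in>E. \<forall>f\<in>E. card e = card f")
  case True
  with that \<open>V \<noteq> {}\<close> splitting_vertex_if_uniform[OF os] show ?thesis by blast
next
  case False
  have "E \<subseteq> Pow V" "finite V"
    using os unfolding one_sperner_def hypergraph_def by auto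
  then have fin: "finite (card ` E)" by (meson finite_Pow_iff finite_imageI finite_subset)
  have "E \<noteq> {}" using False by blast
  obtain e where e: "e \<in> E" "card e = Max (card ` E)"
    using Max_in[OF fin] \<open>E \<noteq> {}\<close> by fastforce
  obtain f where f: "f \<in> E" "card f = Min (card ` E)"
    using Min_in[OF fin] \<open>E \<noteq> {}\<close> by fastforce
  have e_max: "\<forall>g\<in>E. card g \<le> card e" and f_min: "\<forall>g\<in>E. card f \<le> card g"
    using e(2) f(2) fin by auto
  have "card f < card e"
  proof (rule ccontr)
    assume "\<not> card f < card e"
    then have "card g = card e" if "g \<in> E" for g
      using e_max f_min that by (meson le_antisym le_trans not_le)
    then show False using False by metis
  qed
  then have "card (f - e) = 1"
    using e f by (intro one_sperner_card_diff_eq_1[OF os]) auto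
  then obtain w where "f - e = {w}" by (rule card_1_singletonE)
  have "splitting_vertex E w"
    using \<open>f - e = {w}\<close>
    by (intro splitting_vertex_min_diff_max[OF os e(1) e_max f(1) f_min \<open>card f < card e\<close>]) auto
  moreover have "w \<in> V" using f(1) \<open>E \<subseteq> Pow V\<close> \<open>f - e = {w}\<close> by blast
  ultimately show ?thesis by (rule that[rotated])
qed

lemma one_sperner_gluing_at_splitting_vertex:
  assumes os: "one_sperner V E" and z: "z \<in> V" "splitting_vertex E z"
  shows "\<exists>V1 E1 V2 E2. one_sperner V1 E1 \<and> one_sperner V2 E2 \<and>
        card V1 < card V \<and> card V2 < card V \<and>
        safe_gluing V1 E1 V2 E2 z \<and> gluing V1 E1 V2 E2 z = (V, E)"
proof -
  have "finite V" and edge_sub: "\<And>e. e \<in> E \<Longrightarrow> e \<subseteq> V"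
    using os unfolding one_sperner_def hypergraph_def by auto
  define Ez where "Ez = {e\<in>E. z \<in> e}"
  define En where "En = {f\<in>E. z \<notin> f}"
  define V1 where "V1 = (\<Union>e\<in>Ez. e - {z})"
  define V2 where "V2 = V - V1 - {z}"
  define E1 where "E1 = (\<lambda>e. e - {z}) ` Ez"
  define E2 where "E2 = (\<lambda>f. f - V1) ` En"
  have "V1 \<subseteq> V - {z}" unfolding V1_def Ez_def using edge_sub by blast
  have V1_sub: "\<And>f. f \<in> En \<Longrightarrow> V1 \<subseteq> f"
    using z(2) unfolding V1_def Ez_def En_def splitting_vertex_def by blast
  have "(\<lambda>e. {z} \<union> e) ` E1 = (\<lambda>e. {z} \<union> (e - {z})) ` Ez"
    unfolding E1_def image_image ..
  also have "\<dots> = (\<lambda>e. e) ` Ez" by (rule image_cong) (auto simp: Ez_def)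
  finally have "(\<lambda>e. {z} \<union> e) ` E1 = Ez" by simp
  moreover have "(\<lambda>e. V1 \<union> e) ` E2 = (\<lambda>f. V1 \<union> (f - V1)) ` En"
    unfolding E2_def image_image ..
  moreover have "\<dots> = (\<lambda>f. f) ` En" by (rule image_cong) (use V1_sub in blast)+
  moreover have "Ez \<union> En = E" "V1 \<union> V2 \<union> {z} = V"
    unfolding Ez_def En_def V2_def using \<open>V1 \<subseteq> V - {z}\<close> z(1) by blast+
  ultimately have glue: "gluing V1 E1 V2 E2 z = (V, E)"
    unfolding gluing_def by simp
  have "finite V1" using \<open>finite V\<close> \<open>V1 \<subseteq> V - {z}\<close> by (auto intro: finite_subset)
  moreover have "E1 \<subseteq> Pow V1" unfolding E1_def V1_def by blast
  ultimately have hyp1: "hypergraph V1 E1" unfolding hypergraph_def by blast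
  have "finite V2" unfolding V2_def using \<open>finite V\<close> by simp
  moreover have "E2 \<subseteq> Pow V2" unfolding E2_def V2_def En_def using edge_sub by blast
  ultimately have hyp2: "hypergraph V2 E2" unfolding hypergraph_def by blast
  have "one_sperner V1 E1"
    unfolding E1_def
    by (rule one_sperner_image[OF os hyp1[unfolded E1_def]]) (auto simp: Ez_def)
  moreover have "one_sperner V2 E2"
    unfolding E2_def using V1_sub
    by (intro one_sperner_image[OF os hyp2[unfolded E2_def]]) (auto simp: En_def)
  moreover have "card V1 < card V" "card V2 < card V"
    using \<open>V1 \<subseteq> V - {z}\<close> z(1) \<open>finite V\<close> unfolding V2_def by (auto intro: psubset_card_mono)
  moreover have "safe_gluing V1 E1 V2 E2 z"
    using hyp1 hyp2 glue os \<open>V1 \<subseteq> V - {z}\<close>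
    unfolding safe_gluing_def gluing_ok_def V2_def by auto
  ultimately show ?thesis using glue by blast
qed

theorem theorem10:
  fixes V :: "'a set" and E :: "'a set set"
  assumes "hypergraph V E"
  shows "one_sperner V E \<longleftrightarrow>
    ((V = {} \<and> (E = {} \<or> E = {{}})) \<or>
     (\<exists>V1 E1 V2 E2 z. one_sperner V1 E1 \<and> one_sperner V2 E2 \<and>
        card V1 < card V \<and> card V2 < card V \<and>
        safe_gluing V1 E1 V2 E2 z \<and> gluing V1 E1 V2 E2 z = (V, E)))"
proof (cases "V = {}")
  case True
  then have "E = {} \<or> E = {{}}"
    using assms unfolding hypergraph_def by (simp add: subset_singleton_iff)
  then show ?thesis using True by (auto simp: one_sperner_def hypergraph_def)
next
  case False
  have "one_sperner V E" if "safe_gluing V1 E1 V2 E2 z" "gluing V1 E1 V2 E2 z = (V, E)"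
    for V1 E1 V2 E2 z
    using that unfolding safe_gluing_def by simp
  moreover have "\<exists>V1 E1 V2 E2 z. one_sperner V1 E1 \<and> one_sperner V2 E2 \<and>
        card V1 < card V \<and> card V2 < card V \<and>
        safe_gluing V1 E1 V2 E2 z \<and> gluing V1 E1 V2 E2 z = (V, E)" if "one_sperner V E"
    using one_sperner_splitting_vertex_exists[OF that False]
      one_sperner_gluing_at_splitting_vertex[OF that] by metis
  ultimately show ?thesis using False by blast
qed

end
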